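(* Let $N$ be a phylogenetic network, $r$ a reticulation with parents $x_L,x_R$ (edges $(x_L,r),(x_R,r)$), and let $(u,v)$ be an edge with $u$ a split node subdividing the edge $(x_L,r)$. If the tail move of $(u,v)$ from $(x_L,r)$ to $(x_R,r)$ is valid, resulting in $N'$, then there is a sequence of at most $4$ valid head moves transforming $N$ into $N'$.
   Context: A (binary) phylogenetic network on a finite label set $X$ ($|X|\ge 2$) is a directed acyclic graph without parallel edges having exactly one root (indegree 0, outdegree 1), exactly $|X|$ leaves (indegree 1, outdegree 0) bijectively labelled by $X$, and all other nodes are either split nodes (indegree 1, outdegree 2) or reticulations (indegree 2, outdegree 1). Subdividing an edge $(a,b)$ means replacing it by a new node $x$ and edges $(a,x),(x,b)$; suppressing an indegree-1 outdegree-1 node $x$ with parent $a$ and child $b$ means deleting $x$ and its edges and adding $(a,b)$. Tail move of $(u,v)$ ($u$ a split node) to edge $f$: delete $(u,v)$, subdivide $f$ with new node $u'$, suppress $u$, add $(u',v)$; "from $(p,q)$ to $f$" means $p$ is the parent and $q$ the other child of $u$. Head move of $(u,v)$ ($v$ a reticulation) to $f$: delete $(u,v)$, subdivide $f$ with new node $v'$, suppress $v$, add $(u,v')$. A move is valid only if the result is a phylogenetic network. *)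

theory Defs
  imports Main
begin

text \<open>A network: a finite set of nodes (natural numbers, so fresh names are always
available), a set of directed edges, and a labelling function (only relevant on leaves).\<close>

record 'x network =
  nodes :: "nat set"
  edges :: "(nat \<times> nat) set"
  lbl   :: "nat \<Rightarrow> 'x"

definition indeg :: "'x network \<Rightarrow> nat \<Rightarrow> nat" where
  "indeg N v = card {u. (u, v) \<in> edges N}"

definition outdeg :: "'x network \<Rightarrow> nat \<Rightarrow> nat" where
  "outdeg N v = card {w. (v, w) \<in> edges N}"

definition is_root :: "'x network \<Rightarrow> nat \<Rightarrow> bool" where
  "is_root N v \<longleftrightarrow> v \<in> nodes N \<and> indeg N v = 0 \<and> outdeg N v = 1"

definition is_leaf :: "'x network \<Rightarrow> nat \<Rightarrow> bool" where
  "is_leaf N v \<longleftrightarrow> v \<in> nodes N \<and> indeg N v = 1 \<and> outdeg N v = 0"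

definition is_split :: "'x network \<Rightarrow> nat \<Rightarrow> bool" where
  "is_split N v \<longleftrightarrow> v \<in> nodes N \<and> indeg N v = 1 \<and> outdeg N v = 2"

definition is_ret :: "'x network \<Rightarrow> nat \<Rightarrow> bool" where
  "is_ret N v \<longleftrightarrow> v \<in> nodes N \<and> indeg N v = 2 \<and> outdeg N v = 1"

definition leaves :: "'x network \<Rightarrow> nat set" where
  "leaves N = {v. is_leaf N v}"

text \<open>Binary phylogenetic network on label set X (edges form a set, so there are no
parallel edges; acyclicity also excludes loops).\<close>
definition phylo_net :: "'x set \<Rightarrow> 'x network \<Rightarrow> bool" where
  "phylo_net X N \<longleftrightarrow>
     finite X \<and> card X \<ge> 2 \<and>
     finite (nodes N) \<and> edges N \<subseteq> nodes N \<times> nodes N \<and> acyclic (edges N) \<and>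
     card {v \<in> nodes N. is_root N v} = 1 \<and>
     (\<forall>v \<in> nodes N. is_root N v \<or> is_leaf N v \<or> is_split N v \<or> is_ret N v) \<and>
     bij_betw (lbl N) (leaves N) X"

definition subdivide :: "(nat \<times> nat) set \<Rightarrow> nat \<times> nat \<Rightarrow> nat \<Rightarrow> (nat \<times> nat) set" where
  "subdivide E f w = (E - {f}) \<union> {(fst f, w), (w, snd f)}"

definition suppress :: "(nat \<times> nat) set \<Rightarrow> nat \<Rightarrow> (nat \<times> nat) set" where
  "suppress E x = {e \<in> E. fst e \<noteq> x \<and> snd e \<noteq> x} \<union> {(a, b). (a, x) \<in> E \<and> (x, b) \<in> E}"

definition tail_move :: "'x set \<Rightarrow> 'x network \<Rightarrow> nat \<times> nat \<Rightarrow> nat \<times> nat \<Rightarrow> nat \<Rightarrow> 'x network \<Rightarrow> bool" where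
  "tail_move X N e f w N' \<longleftrightarrow>
     (let u = fst e; v = snd e; E1 = edges N - {e} in
       e \<in> edges N \<and> is_split N u \<and> f \<in> E1 \<and> w \<notin> nodes N \<and>
       N' = \<lparr> nodes = (nodes N - {u}) \<union> {w},
              edges = suppress (subdivide E1 f w) u \<union> {(w, v)},
              lbl = lbl N \<rparr> \<and>
       phylo_net X N')"

definition head_move :: "'x set \<Rightarrow> 'x network \<Rightarrow> nat \<times> nat \<Rightarrow> nat \<times> nat \<Rightarrow> nat \<Rightarrow> 'x network \<Rightarrow> bool" where
  "head_move X N e f w N' \<longleftrightarrow>
     (let u = fst e; v = snd e; E1 = edges N - {e} in
       e \<in> edges N \<and> is_ret N v \<and> f \<in> E1 \<and> w \<notin> nodes N \<and>
       N' = \<lparr> nodes = (nodes N - {v}) \<union> {w},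
              edges = suppress (subdivide E1 f w) v \<union> {(u, w)},
              lbl = lbl N \<rparr> \<and>
       phylo_net X N')"

definition head_step :: "'x set \<Rightarrow> 'x network \<Rightarrow> 'x network \<Rightarrow> bool" where
  "head_step X N N' \<longleftrightarrow> (\<exists>e f w. head_move X N e f w N')"

definition net_iso :: "'x network \<Rightarrow> 'x network \<Rightarrow> bool" where
  "net_iso N N' \<longleftrightarrow> (\<exists>h. bij_betw h (nodes N) (nodes N') \<and>
      (\<forall>x \<in> nodes N. \<forall>y \<in> nodes N. (x, y) \<in> edges N \<longleftrightarrow> (h x, h y) \<in> edges N') \<and>
      (\<forall>x \<in> leaves N. lbl N' (h x) = lbl N x))"

end

theory Submission
  imports Defs "HOL-Library.Multiset"
begin

text \<open>Up to renaming u to the new node, the tail move of (u, v) from (xL, r) to (xR, r) just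
  exchanges the parents of u and r: the edges (xL, u), (xR, r) become (xR, u), (xL, r).
  Acyclicity of the result says that u cannot reach xR. If the child c of r differs from v, two
  head moves perform the exchange: move (xR, r) onto (xL, u), which creates a reticulation w above
  u with parents xL and xR, then move (xL, w) onto (u, c), which recreates r below u. Since u
  cannot reach xR, all intermediate networks are acyclic. If c = v, the second move would
  create parallel edges; so the head of (u, v) is first parked on a pendant edge, the two moves
  are made there, and the head is moved back, four moves in total.\<close>

lemma acyclic_empty: "acyclic {}"
  by (simp add: acyclic_def)

lemma acyclic_trancl_neq: "acyclic E \<Longrightarrow> (a, b) \<in> E\<^sup>+ \<Longrightarrow> a \<noteq> b"
  by (auto simp: acyclic_def)

lemma acyclic_by_contraction:
  assumes "acyclic H" and "acyclic K"
    and collapse: "\<And>a b. (a, b) \<in> K \<Longrightarrow> \<phi> a = \<phi> b"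
    and map: "\<And>a b. (a, b) \<in> G \<Longrightarrow> (\<phi> a, \<phi> b) \<in> H\<^sup>+ \<or> (a, b) \<in> K"
  shows "acyclic G"
proof -
  have K_collapse: "\<phi> x = \<phi> y" if "(x, y) \<in> K\<^sup>+" for x y
    using that by (induction rule: trancl_induct) (auto dest: collapse)
  have "(\<phi> x, \<phi> y) \<in> H\<^sup>+ \<or> (x, y) \<in> K\<^sup>+" if "(x, y) \<in> G\<^sup>+" for x y
    using that
  proof (induction rule: trancl_induct)
    case (base y)
    then show ?case using map by blast
  next
    case (step y z)
    from map[OF step(2)] step(3) show ?case
      using K_collapse collapse by (auto intro: trancl_trans)
  qed
  then show ?thesis
    using assms(1,2) unfolding acyclic_def by blast
qed

lemma rtrancl_map:
  assumes "\<And>a b. (a, b) \<in> G \<Longrightarrow> (\<phi> a, \<phi> b) \<in> H\<^sup>*" and "(x, y) \<in> G\<^sup>*"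
  shows "(\<phi> x, \<phi> y) \<in> H\<^sup>*"
  using assms(2) by (induction rule: rtrancl_induct) (auto dest: assms(1) intro: rtrancl_trans)

lemma rtrancl_avoiding_start_in: "(a, b) \<in> E\<^sup>* \<Longrightarrow> (a, b) \<in> {e \<in> E. snd e \<noteq> a}\<^sup>*"
proof (induction rule: rtrancl_induct)
  case (step y z)
  then show ?case by (cases "z = a") (auto intro: rtrancl_into_rtrancl)
qed simp

lemma rtrancl_avoiding_end_out: "(a, b) \<in> E\<^sup>* \<Longrightarrow> (a, b) \<in> {e \<in> E. fst e \<noteq> b}\<^sup>*"
proof (induction rule: converse_rtrancl_induct)
  case (step y z)
  then show ?case by (cases "y = b") (auto intro: converse_rtrancl_into_rtrancl)
qed simp

lemma count_image_mset_inj_on: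
  assumes "inj_on h V" "set_mset M \<subseteq> V" "x \<in> V"
  shows "count (image_mset h M) (h x) = count M x"
proof (cases "x \<in># M")
  case True
  then have "h -` {h x} \<inter> set_mset M = {x}" using assms by (auto dest: inj_onD)
  then show ?thesis by (simp add: count_image_mset)
next
  case False
  then have "h -` {h x} \<inter> set_mset M = {}" using assms by (auto dest: inj_onD)
  then show ?thesis using False by (simp add: count_image_mset not_in_iff)
qed

lemma count_image_mset_exchange:
  assumes "finite E" "finite A" "R \<subseteq> E" "A \<inter> (E - R) = {}"
    and "\<And>e. e \<in> E - R \<Longrightarrow> h (\<pi> e) = \<pi> e"
    and "inj_on h V" "\<pi> ` E \<subseteq> V" "x \<in> V"
    and "image_mset (h \<circ> \<pi>) (mset_set R) = image_mset \<pi> (mset_set A)"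
  shows "count (image_mset \<pi> (mset_set (E - R \<union> A))) (h x) = count (image_mset \<pi> (mset_set E)) x"
proof -
  have fin: "finite (E - R)" "finite R" using assms(1,3) finite_subset by auto
  have new: "mset_set (E - R \<union> A) = mset_set (E - R) + mset_set A"
    using assms(4) fin assms(2) by (subst mset_set_Union) (auto simp: Int_commute)
  have old: "mset_set E = mset_set (E - R) + mset_set R"
    using assms(3) fin mset_set_Union[of "E - R" R] by (simp add: Un_absorb2 Int_commute)
  have fixed: "image_mset \<pi> (mset_set (E - R)) = image_mset (h \<circ> \<pi>) (mset_set (E - R))"
    by (rule image_mset_cong) (use assms(5) fin in auto)
  have "image_mset \<pi> (mset_set (E - R \<union> A)) =
      image_mset (h \<circ> \<pi>) (mset_set (E - R)) + image_mset (h \<circ> \<pi>) (mset_set R)"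
    unfolding new image_mset_union fixed assms(9) ..
  also have "\<dots> = image_mset h (image_mset \<pi> (mset_set E))"
    unfolding old by (simp add: multiset.map_comp)
  finally show ?thesis
    using count_image_mset_inj_on[OF assms(6) _ assms(8)] assms(1,7) by auto
qed

lemma card_in_neighbours_eq_count:
  "finite E \<Longrightarrow> card {x. (x, y) \<in> E} = count (image_mset snd (mset_set E)) y"
  by (rule trans[OF bij_betw_same_card[of "\<lambda>x. (x, y)" _ "{e \<in> E. snd e = y}"]])
    (auto simp: bij_betw_def inj_on_def image_def count_image_mset vimage_def Int_def conj_commute)

lemma card_out_neighbours_eq_count:
  "finite E \<Longrightarrow> card {y. (x, y) \<in> E} = count (image_mset fst (mset_set E)) x"
  by (rule trans[OF bij_betw_same_card[of "\<lambda>y. (x, y)" _ "{e \<in> E. fst e = x}"]])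
    (auto simp: bij_betw_def inj_on_def image_def count_image_mset vimage_def Int_def conj_commute)

lemma finite_in_neighbours: "finite E \<Longrightarrow> finite {x. (x, y) \<in> E}"
  by (rule finite_subset[of _ "fst ` E"]) force+

lemma finite_out_neighbours: "finite E \<Longrightarrow> finite {y. (x, y) \<in> E}"
  by (rule finite_subset[of _ "snd ` E"]) force+

lemma mem_card_2_iff:
  "finite A \<Longrightarrow> card A = 2 \<Longrightarrow> a \<in> A \<Longrightarrow> b \<in> A \<Longrightarrow> a \<noteq> b \<Longrightarrow> x \<in> A \<longleftrightarrow> x = a \<or> x = b"
  using card_subset_eq[of A "{a, b}"] by auto

lemma phylo_net_finite_edges: "phylo_net X N \<Longrightarrow> finite (edges N)"
  unfolding phylo_net_def by (meson finite_SigmaI finite_subset)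

lemma phylo_net_transfer:
  assumes N: "phylo_net X N" and h: "bij_betw h (nodes N) (nodes M)"
    and deg: "\<And>x. x \<in> nodes N \<Longrightarrow> indeg M (h x) = indeg N x \<and> outdeg M (h x) = outdeg N x"
    and lbl: "\<And>x. x \<in> leaves N \<Longrightarrow> lbl M (h x) = lbl N x"
    and "edges M \<subseteq> nodes M \<times> nodes M" and "acyclic (edges M)"
  shows "phylo_net X M"
proof -
  have kind: "is_root M (h x) = is_root N x \<and> is_leaf M (h x) = is_leaf N x \<and>
      is_split M (h x) = is_split N x \<and> is_ret M (h x) = is_ret N x" if "x \<in> nodes N" for x
    using deg[OF that] that bij_betwE[OF h] by (simp add: is_root_def is_leaf_def is_split_def is_ret_def)
  have image_kind: "{v \<in> nodes M. P M v} = h ` {v \<in> nodes N. P N v}"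
    if "\<And>x. x \<in> nodes N \<Longrightarrow> P M (h x) = P N x" for P
  proof -
    have "{v \<in> nodes M. P M v} = {v \<in> h ` nodes N. P M v}"
      using bij_betw_imp_surj_on[OF h] by simp
    also have "\<dots> = h ` {v \<in> nodes N. P N v}" using that by auto
    finally show ?thesis .
  qed
  have inj: "inj_on h (nodes N)" using h by (rule bij_betw_imp_inj_on)
  have roots: "{v \<in> nodes M. is_root M v} = h ` {v \<in> nodes N. is_root N v}"
    by (rule image_kind) (use kind in blast)
  have leaves: "leaves M = h ` leaves N"
    using image_kind[of is_leaf] kind by (simp add: leaves_def is_leaf_def conj_commute)
  have "bij_betw h (leaves N) (leaves M)"
    unfolding leaves by (rule inj_on_imp_bij_betw, rule inj_on_subset[OF inj])
      (auto simp: leaves_def is_leaf_def)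
  moreover have "bij_betw (lbl M \<circ> h) (leaves N) X"
    using N bij_betw_cong[of "leaves N" "lbl M \<circ> h" "lbl N" X] lbl by (simp add: phylo_net_def)
  ultimately have "bij_betw (lbl M) (leaves M) X" by (simp add: bij_betw_comp_iff)
  moreover have "card {v \<in> nodes M. is_root M v} = card {v \<in> nodes N. is_root N v}"
    unfolding roots by (rule card_image, rule inj_on_subset[OF inj]) auto
  moreover have "finite (nodes M)" using h N bij_betw_finite by (auto simp: phylo_net_def)
  moreover have "\<forall>v \<in> nodes M. is_root M v \<or> is_leaf M v \<or> is_split M v \<or> is_ret M v"
  proof
    fix y assume "y \<in> nodes M"
    then obtain x where "x \<in> nodes N" "y = h x" using bij_betw_imp_surj_on[OF h] by blast
    then show "is_root M y \<or> is_leaf M y \<or> is_split M y \<or> is_ret M y"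
      using kind N by (simp add: phylo_net_def)
  qed
  ultimately show ?thesis using N assms(5,6) by (auto simp: phylo_net_def)
qed

lemma net_iso_acyclic:
  assumes "net_iso M N'" "edges M \<subseteq> nodes M \<times> nodes M" "acyclic (edges N')"
  shows "acyclic (edges M)"
proof -
  obtain h where h: "\<And>x y. x \<in> nodes M \<Longrightarrow> y \<in> nodes M \<Longrightarrow> (x, y) \<in> edges M \<longleftrightarrow> (h x, h y) \<in> edges N'"
    using assms(1) unfolding net_iso_def by blast
  show ?thesis
  proof (rule acyclic_by_contraction[where H = "edges N'" and K = "{}" and \<phi> = h])
    show "(h a, h b) \<in> (edges N')\<^sup>+ \<or> (a, b) \<in> {}" if "(a, b) \<in> edges M" for a b
      using that h assms(2) by blast
  qed (use assms(3) in \<open>simp_all add: acyclic_empty\<close>)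
qed

lemma reticulation_of_two_parents:
  assumes N: "phylo_net X N" and "(p, v) \<in> edges N" "(q, v) \<in> edges N" "p \<noteq> q"
  obtains d where "\<And>x. (x, v) \<in> edges N \<longleftrightarrow> x = p \<or> x = q" "\<And>y. (v, y) \<in> edges N \<longleftrightarrow> y = d"
proof -
  have fin: "finite (edges N)" using N by (rule phylo_net_finite_edges)
  have "v \<in> nodes N" using N assms(2) by (auto simp: phylo_net_def)
  then have "is_root N v \<or> is_leaf N v \<or> is_split N v \<or> is_ret N v"
    using N by (simp add: phylo_net_def)
  moreover have "card {p, q} \<le> card {x. (x, v) \<in> edges N}"
    by (rule card_mono[OF finite_in_neighbours[OF fin]]) (use assms(2,3) in auto)
  then have "indeg N v \<ge> 2" using \<open>p \<noteq> q\<close> by (simp add: indeg_def)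
  ultimately have "is_ret N v" by (auto simp: is_root_def is_leaf_def is_split_def)
  then have in_card: "card {x. (x, v) \<in> edges N} = 2" and out_card: "card {y. (v, y) \<in> edges N} = 1"
    by (simp_all add: is_ret_def indeg_def outdeg_def)
  obtain d where "{y. (v, y) \<in> edges N} = {d}" using card_1_singletonE[OF out_card] .
  moreover have "(x, v) \<in> edges N \<longleftrightarrow> x = p \<or> x = q" for x
    using mem_card_2_iff[OF finite_in_neighbours[OF fin] in_card, of p q x] assms(2-4) by simp
  ultimately show thesis using that[of d] by blast
qed

lemma split_node_neighbours:
  assumes N: "phylo_net X N" and "is_split N u"
    and "(p, u) \<in> edges N" "(u, a) \<in> edges N" "(u, b) \<in> edges N" "a \<noteq> b"
  shows "(x, u) \<in> edges N \<longleftrightarrow> x = p" and "(u, y) \<in> edges N \<longleftrightarrow> y = a \<or> y = b"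
proof -
  have fin: "finite (edges N)" using N by (rule phylo_net_finite_edges)
  have in_card: "card {x. (x, u) \<in> edges N} = 1" and out_card: "card {y. (u, y) \<in> edges N} = 2"
    using \<open>is_split N u\<close> by (simp_all add: is_split_def indeg_def outdeg_def)
  obtain p' where "{x. (x, u) \<in> edges N} = {p'}" using card_1_singletonE[OF in_card] .
  then show "(x, u) \<in> edges N \<longleftrightarrow> x = p" using assms(3) by (auto simp: set_eq_iff)
  show "(u, y) \<in> edges N \<longleftrightarrow> y = a \<or> y = b"
    using mem_card_2_iff[OF finite_out_neighbours[OF fin] out_card, of a b y] assms(4-6) by simp
qed

lemma phylo_net_other_leafE:
  assumes N: "phylo_net X N"
  obtains l a where "\<And>x. (x, l) \<in> edges N \<longleftrightarrow> x = a" "\<And>y. (l, y) \<notin> edges N" "l \<noteq> d"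
proof -
  have fin: "finite (edges N)" using N by (rule phylo_net_finite_edges)
  have "card (leaves N) \<ge> 2"
    using N bij_betw_same_card[of "lbl N" "leaves N" X] by (simp add: phylo_net_def)
  then have "\<not> leaves N \<subseteq> {d}" using card_mono[of "{d}" "leaves N"] by auto
  then obtain l where l: "is_leaf N l" "l \<noteq> d" by (auto simp: leaves_def)
  then have "card {x. (x, l) \<in> edges N} = 1" "card {y. (l, y) \<in> edges N} = 0"
    by (simp_all add: is_leaf_def indeg_def outdeg_def)
  moreover obtain a where "{x. (x, l) \<in> edges N} = {a}"
    using card_1_singletonE[OF calculation(1)] .
  ultimately show thesis
    using that[of l a] l(2) finite_out_neighbours[OF fin, of l] by auto
qed

lemma head_move_edges:
  assumes in_v: "\<And>x. (x, v) \<in> E \<longleftrightarrow> x = p \<or> x = q" and out_v: "\<And>y. (v, y) \<in> E \<longleftrightarrow> y = d"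
    and "p \<noteq> q" "a \<noteq> v" "b \<noteq> v" "w \<noteq> v" "v \<noteq> d"
  shows "suppress (subdivide (E - {(p, v)}) (a, b) w) v \<union> {(p, w)} =
    E - {(p, v), (q, v), (v, d), (a, b)} \<union> {(q, d), (a, w), (w, b), (p, w)}"
proof (rule set_eqI, clarify)
  fix x y
  have "(x, y) \<in> suppress (subdivide (E - {(p, v)}) (a, b) w) v \<longleftrightarrow>
     ((x, y) \<in> subdivide (E - {(p, v)}) (a, b) w \<and> x \<noteq> v \<and> y \<noteq> v) \<or> (x, y) = (q, d)"
    unfolding suppress_def subdivide_def by (simp add: in_v out_v) (use assms(3-7) in blast)
  then show "(x, y) \<in> suppress (subdivide (E - {(p, v)}) (a, b) w) v \<union> {(p, w)} \<longleftrightarrow>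
    (x, y) \<in> E - {(p, v), (q, v), (v, d), (a, b)} \<union> {(q, d), (a, w), (w, b), (p, w)}"
    using assms(3-7) in_v[of x] out_v[of y] by (auto simp: subdivide_def)
qed

text \<open>Once v is renamed to w, the four deleted and the four added edges have the same
  multisets of tails and of heads.\<close>

lemma head_move_preserves_degrees:
  fixes E :: "(nat \<times> nat) set" and p q v d a b w x :: nat
  defines "E' \<equiv> E - {(p, v), (q, v), (v, d), (a, b)} \<union> {(q, d), (a, w), (w, b), (p, w)}"
  assumes fin: "finite E" and E_V: "E \<subseteq> V \<times> V" and "x \<in> V" and w: "w \<notin> V"
    and in_v: "\<And>x. (x, v) \<in> E \<longleftrightarrow> x = p \<or> x = q" and "p \<noteq> q"
    and out_v: "\<And>y. (v, y) \<in> E \<longleftrightarrow> y = d"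
    and ab: "(a, b) \<in> E" "a \<noteq> v" "b \<noteq> v" "a \<noteq> p" and "(q, d) \<notin> E"
    and ne: "p \<noteq> v" "q \<noteq> v" "v \<noteq> d"
  shows "card {y. (y, (id(v := w)) x) \<in> E'} = card {y. (y, x) \<in> E}"
    and "card {y. ((id(v := w)) x, y) \<in> E'} = card {y. (x, y) \<in> E}"
proof -
  let ?R = "{(p, v), (q, v), (v, d), (a, b)}" and ?A = "{(q, d), (a, w), (w, b), (p, w)}"
  let ?h = "id(v := w)"
  have edges: "(p, v) \<in> E" "(q, v) \<in> E" "(v, d) \<in> E" using in_v out_v by simp_all
  then have w_ne: "w \<noteq> p" "w \<noteq> q" "w \<noteq> d" "w \<noteq> a" "w \<noteq> b" using ab(1) E_V w by auto
  have untouched: "fst e \<noteq> v \<and> snd e \<noteq> v" if "e \<in> E - ?R" for e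
    using that in_v[of "fst e"] out_v[of "snd e"] by (cases e) auto
  have exchange: "count (image_mset \<pi> (mset_set E')) (?h x) = count (image_mset \<pi> (mset_set E)) x"
    if "image_mset (?h \<circ> \<pi>) (mset_set ?R) = image_mset \<pi> (mset_set ?A)"
      and "\<pi> ` E \<subseteq> V" "\<And>e. e \<in> E - ?R \<Longrightarrow> \<pi> e \<noteq> v" for \<pi> :: "nat \<times> nat \<Rightarrow> nat"
    unfolding E'_def
  proof (rule count_image_mset_exchange[OF _ _ _ _ _ _ that(2) \<open>x \<in> V\<close> that(1)])
    show "inj_on ?h V" using w by (auto simp: inj_on_def)
  qed (use fin edges ab(1) w E_V \<open>(q, d) \<notin> E\<close> that(3) in auto)
  have R: "mset_set ?R = {#(p, v), (q, v), (v, d), (a, b)#}"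
    and A: "mset_set ?A = {#(q, d), (a, w), (w, b), (p, w)#}"
    using ne ab(2-4) \<open>p \<noteq> q\<close> w_ne by (simp_all add: mset_set.insert_remove)
  have "finite E'" using fin by (simp add: E'_def)
  moreover have "count (image_mset snd (mset_set E')) (?h x) = count (image_mset snd (mset_set E)) x"
    using E_V untouched ne ab(3) by (intro exchange) (auto simp: R A add_mset_commute)
  moreover have "count (image_mset fst (mset_set E')) (?h x) = count (image_mset fst (mset_set E)) x"
    using E_V untouched ne ab(2) by (intro exchange) (auto simp: R A add_mset_commute)
  ultimately show "card {y. (y, ?h x) \<in> E'} = card {y. (y, x) \<in> E}"
    and "card {y. (?h x, y) \<in> E'} = card {y. (x, y) \<in> E}"
    using fin by (simp_all only: card_in_neighbours_eq_count card_out_neighbours_eq_count)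
qed

lemma head_moveI:
  fixes N :: "'x network" and p q v d a b w :: nat
  defines "E \<equiv> edges N"
  defines "E' \<equiv> E - {(p, v), (q, v), (v, d), (a, b)} \<union> {(q, d), (a, w), (w, b), (p, w)}"
  assumes N: "phylo_net X N" and "acyclic E'"
    and in_v: "\<And>x. (x, v) \<in> E \<longleftrightarrow> x = p \<or> x = q" and "p \<noteq> q"
    and out_v: "\<And>y. (v, y) \<in> E \<longleftrightarrow> y = d"
    and ab: "(a, b) \<in> E" "a \<noteq> v" "b \<noteq> v" "a \<noteq> p" and "(q, d) \<notin> E"
    and w: "w \<notin> nodes N"
  shows "head_move X N (p, v) (a, b) w \<lparr>nodes = nodes N - {v} \<union> {w}, edges = E', lbl = lbl N\<rparr>"
proof -
  let ?M = "\<lparr>nodes = nodes N - {v} \<union> {w}, edges = E', lbl = lbl N\<rparr>" and ?h = "id(v := w)"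
  have fin: "finite E" using N by (simp add: E_def phylo_net_finite_edges)
  have E_nodes: "E \<subseteq> nodes N \<times> nodes N" and "acyclic E"
    using N by (simp_all add: E_def phylo_net_def)
  have edges: "(p, v) \<in> E" "(q, v) \<in> E" "(v, d) \<in> E" using in_v out_v by simp_all
  then have in_nodes: "p \<in> nodes N" "q \<in> nodes N" "v \<in> nodes N" "d \<in> nodes N" "a \<in> nodes N" "b \<in> nodes N"
    using ab(1) E_nodes by auto
  have ne: "p \<noteq> v" "q \<noteq> v" "v \<noteq> d"
    using acyclic_trancl_neq[OF \<open>acyclic E\<close> r_into_trancl] edges by blast+
  have "{x. (x, v) \<in> E} = {p, q}" "{y. (v, y) \<in> E} = {d}" by (simp_all add: set_eq_iff in_v out_v)
  then have ret: "is_ret N v"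
    using \<open>p \<noteq> q\<close> in_nodes by (simp add: is_ret_def indeg_def outdeg_def E_def)
  have bij: "bij_betw ?h (nodes N) (nodes ?M)"
    using in_nodes w by (auto simp: bij_betw_def inj_on_def image_def)
  have deg: "indeg ?M (?h x) = indeg N x \<and> outdeg ?M (?h x) = outdeg N x" if "x \<in> nodes N" for x
    using head_move_preserves_degrees[OF fin E_nodes that w in_v \<open>p \<noteq> q\<close> out_v ab \<open>(q, d) \<notin> E\<close> ne]
    by (simp add: indeg_def outdeg_def E_def E'_def)
  have "v \<notin> leaves N" using ret by (auto simp: leaves_def is_leaf_def is_ret_def)
  have E'_nodes: "E' \<subseteq> nodes ?M \<times> nodes ?M"
  proof
    fix e assume "e \<in> E'"
    then consider "e \<in> E" "fst e \<noteq> v" "snd e \<noteq> v"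
      | "e \<in> {(q, d), (a, w), (w, b), (p, w)}"
      using in_v[of "fst e"] out_v[of "snd e"] unfolding E'_def by (cases e) auto
    then show "e \<in> nodes ?M \<times> nodes ?M"
      using E_nodes in_nodes ne ab(2,3) by cases auto
  qed
  have "phylo_net X ?M"
  proof (rule phylo_net_transfer[OF N bij deg])
    show "lbl ?M (?h x) = lbl N x" if "x \<in> leaves N" for x
      using that \<open>v \<notin> leaves N\<close> by auto
  qed (use E'_nodes \<open>acyclic E'\<close> in simp_all)
  moreover have "E' = suppress (subdivide (E - {(p, v)}) (a, b) w) v \<union> {(p, w)}"
    unfolding E'_def using \<open>p \<noteq> q\<close> ab(2,3) w in_nodes ne(3)
    by (intro head_move_edges[symmetric] in_v out_v) auto
  ultimately show ?thesis
    using edges ret ab w by (simp add: head_move_def E_def)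
qed

lemma head_move_phylo_net: "head_move X N e f w N' \<Longrightarrow> phylo_net X N'"
  unfolding head_move_def Let_def by blast

lemma head_stepI: "head_move X N e f w N' \<Longrightarrow> head_step X N N'"
  unfolding head_step_def by blast

lemma relpowp_head_step_phylo_net: "(head_step X ^^ Suc n) N N' \<Longrightarrow> phylo_net X N'"
  by (auto elim!: relpowp_Suc_E simp: head_step_def dest: head_move_phylo_net)

lemma head_move_edge_contracts:
  assumes "(p, v) \<in> E" "(q, v) \<in> E" "(v, d) \<in> E" "(a, b) \<in> E"
    and w_fresh: "\<And>x. (x, w) \<notin> E" "\<And>x. (w, x) \<notin> E"
    and "(x, y) \<in> E - {(p, v), (q, v), (v, d), (a, b)} \<union> {(q, d), (a, w), (w, b), (p, w)}"
  shows "(x, y) = (w, b) \<or> ((id(w := b)) x, (id(w := b)) y) \<in> (insert (p, b) E)\<^sup>+"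
proof -
  have w_ne: "w \<noteq> p" "w \<noteq> q" "w \<noteq> d" "w \<noteq> a" "w \<noteq> b"
    using assms(1-4) w_fresh by blast+
  have "(q, d) \<in> (insert (p, b) E)\<^sup>+"
    using assms(2,3) by (meson insertCI r_into_trancl' trancl_into_trancl)
  then show ?thesis
    using assms(4,7) w_fresh[of y] w_fresh[of x] w_ne by auto
qed

lemma acyclic_head_move_edges:
  assumes "acyclic E" "(b, p) \<notin> E\<^sup>*"
    and "(p, v) \<in> E" "(q, v) \<in> E" "(v, d) \<in> E" "(a, b) \<in> E"
    and w_fresh: "\<And>x. (x, w) \<notin> E" "\<And>x. (w, x) \<notin> E"
  shows "acyclic (E - {(p, v), (q, v), (v, d), (a, b)} \<union> {(q, d), (a, w), (w, b), (p, w)})"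
proof (rule acyclic_by_contraction[where H = "insert (p, b) E" and K = "{(w, b)}" and \<phi> = "id(w := b)"])
  show "acyclic (insert (p, b) E)" using assms(1,2) by simp
  show "acyclic {(w, b)}" using assms(6) w_fresh by (auto simp: acyclic_empty)
  show "((id(w := b)) x, (id(w := b)) y) \<in> (insert (p, b) E)\<^sup>+ \<or> (x, y) \<in> {(w, b)}"
    if "(x, y) \<in> E - {(p, v), (q, v), (v, d), (a, b)} \<union> {(q, d), (a, w), (w, b), (p, w)}" for x y
    using head_move_edge_contracts[OF assms(3-6) w_fresh that] by blast
qed simp

lemma rtrancl_head_move_to_pendant_edge:
  assumes "(p, v) \<in> E" "(q, v) \<in> E" "(v, d) \<in> E" "(a, l) \<in> E" and leaf: "\<And>y. (l, y) \<notin> E"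
    and w_fresh: "\<And>x. (x, w) \<notin> E" "\<And>x. (w, x) \<notin> E"
    and path: "(x, y) \<in> (E - {(p, v), (q, v), (v, d), (a, l)} \<union> {(q, d), (a, w), (w, l), (p, w)})\<^sup>*"
    and "x \<noteq> w" "y \<noteq> w" "y \<noteq> l"
  shows "(x, y) \<in> E\<^sup>*"
proof -
  have "((id(w := l)) x', (id(w := l)) y') \<in> (insert (p, l) E)\<^sup>*"
    if "(x', y') \<in> E - {(p, v), (q, v), (v, d), (a, l)} \<union> {(q, d), (a, w), (w, l), (p, w)}" for x' y'
    using head_move_edge_contracts[OF assms(1-4) w_fresh that] by auto
  from this path have "((id(w := l)) x, (id(w := l)) y) \<in> (insert (p, l) E)\<^sup>*"
    by (rule rtrancl_map)
  then have "(x, y) \<in> (insert (p, l) E)\<^sup>*" using \<open>x \<noteq> w\<close> \<open>y \<noteq> w\<close> by simp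
  moreover have "(l, y) \<notin> E\<^sup>*" using leaf \<open>y \<noteq> l\<close> by (auto elim: converse_rtranclE)
  ultimately show ?thesis by (auto simp: rtrancl_insert)
qed

definition swap_parents :: "(nat \<times> nat) set \<Rightarrow> nat \<Rightarrow> nat \<Rightarrow> nat \<Rightarrow> nat \<Rightarrow> (nat \<times> nat) set" where
  "swap_parents E xL xR u r = E - {(xL, u), (xR, r)} \<union> {(xR, u), (xL, r)}"

lemma acyclic_swap_parents:
  assumes "acyclic E" "(xL, u) \<in> E" "(u, r) \<in> E" "(u, xR) \<notin> E\<^sup>*"
  shows "acyclic (swap_parents E xL xR u r)"
proof (rule acyclic_by_contraction[where \<phi> = id and K = "{}"])
  show "acyclic (insert (xR, u) E)" using assms(1,4) by simp
  show "(id a, id b) \<in> (insert (xR, u) E)\<^sup>+ \<or> (a, b) \<in> {}"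
    if "(a, b) \<in> swap_parents E xL xR u r" for a b
    using that assms(2,3) by (auto simp: swap_parents_def intro: trancl_into_trancl2)
qed (simp_all add: acyclic_empty)

lemma not_rtrancl_if_acyclic_swap_parents:
  assumes "acyclic (swap_parents E xL xR u r)"
  shows "(u, xR) \<notin> E\<^sup>*"
proof
  let ?S = "swap_parents E xL xR u r"
  assume "(u, xR) \<in> E\<^sup>*"
  then have "(u, xR) \<in> {e \<in> {e \<in> E. snd e \<noteq> u}. fst e \<noteq> xR}\<^sup>*"
    by (intro rtrancl_avoiding_end_out rtrancl_avoiding_start_in)
  moreover have "{e \<in> {e \<in> E. snd e \<noteq> u}. fst e \<noteq> xR} \<subseteq> ?S"
    by (auto simp: swap_parents_def)
  ultimately have "(u, xR) \<in> ?S\<^sup>*" using rtrancl_mono by blast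
  moreover have "(xR, u) \<in> ?S" by (simp add: swap_parents_def)
  ultimately have "(xR, xR) \<in> ?S\<^sup>+" by (meson rtrancl_into_trancl2)
  then show False using assms by (simp add: acyclic_def)
qed

lemma swap_parents_by_two_head_moves:
  fixes N :: "'x network" and xL xR u r c :: nat
  defines "E \<equiv> edges N"
  assumes N: "phylo_net X N"
    and in_r: "\<And>x. (x, r) \<in> E \<longleftrightarrow> x = u \<or> x = xR" and "u \<noteq> xR"
    and out_r: "\<And>y. (r, y) \<in> E \<longleftrightarrow> y = c"
    and in_u: "\<And>x. (x, u) \<in> E \<longleftrightarrow> x = xL"
    and "(u, c) \<notin> E" and "xL \<noteq> xR" and unreachable: "(u, xR) \<notin> E\<^sup>*"
  shows "(head_step X ^^ 2) N \<lparr>nodes = nodes N, edges = swap_parents E xL xR u r, lbl = lbl N\<rparr>"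
proof -
  have E_nodes: "E \<subseteq> nodes N \<times> nodes N" and "acyclic E" and "finite (nodes N)"
    using N by (simp_all add: E_def phylo_net_def)
  have edges: "(xL, u) \<in> E" "(u, r) \<in> E" "(xR, r) \<in> E" "(r, c) \<in> E"
    using in_r in_u out_r by simp_all
  have ne: "u \<noteq> r" "xL \<noteq> r" "xL \<noteq> u" "r \<noteq> c" "u \<noteq> c"
    using acyclic_trancl_neq[OF \<open>acyclic E\<close>] edges by (blast intro: trancl_into_trancl2)+
  obtain w where w: "w \<notin> nodes N" using \<open>finite (nodes N)\<close> ex_new_if_finite infinite_UNIV_nat by blast
  have in_nodes: "xL \<in> nodes N" "u \<in> nodes N" "r \<in> nodes N" "xR \<in> nodes N" "c \<in> nodes N"
    using edges E_nodes by auto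
  then have w_ne: "w \<noteq> xL" "w \<noteq> u" "w \<noteq> r" "w \<noteq> xR" "w \<noteq> c" using w by auto
  have w_fresh: "(x, w) \<notin> E" "(w, x) \<notin> E" for x using w E_nodes by auto
  define E1 where "E1 = E - {(xR, r), (u, r), (r, c), (xL, u)} \<union> {(u, c), (xL, w), (w, u), (xR, w)}"
  define M where "M = \<lparr>nodes = nodes N - {r} \<union> {w}, edges = E1, lbl = lbl N\<rparr>"
  have "acyclic E1"
    unfolding E1_def by (rule acyclic_head_move_edges[OF \<open>acyclic E\<close> unreachable]) (use edges w_fresh in auto)
  have move1: "head_move X N (xR, r) (xL, u) w M"
    unfolding M_def E1_def E_def
    by (rule head_moveI[OF N \<open>acyclic E1\<close>[unfolded E1_def E_def]])
      (use in_r out_r edges ne \<open>u \<noteq> xR\<close> \<open>xL \<noteq> xR\<close> \<open>(u, c) \<notin> E\<close> w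
        in \<open>auto simp: E_def\<close>)
  let ?E2 = "edges M - {(xL, w), (xR, w), (w, u), (u, c)} \<union> {(xR, u), (u, r), (r, c), (xL, r)}"
  have E2: "?E2 = swap_parents E xL xR u r"
    using edges w_fresh w_ne ne \<open>(u, c) \<notin> E\<close> \<open>xL \<noteq> xR\<close> \<open>u \<noteq> xR\<close> by (auto simp: M_def E1_def swap_parents_def)
  have "head_move X M (xL, w) (u, c) r \<lparr>nodes = nodes M - {w} \<union> {r}, edges = ?E2, lbl = lbl M\<rparr>"
  proof (rule head_moveI[OF head_move_phylo_net[OF move1]])
    show "acyclic ?E2"
      using E2 acyclic_swap_parents[OF \<open>acyclic E\<close> edges(1,2) unreachable] by simp
    show "(x, w) \<in> edges M \<longleftrightarrow> x = xL \<or> x = xR" for x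
      using w_fresh w_ne by (auto simp: M_def E1_def)
    show "(w, y) \<in> edges M \<longleftrightarrow> y = u" for y
      using w_fresh w_ne by (auto simp: M_def E1_def)
    show "(xR, u) \<notin> edges M"
      using in_u[of xR] \<open>xL \<noteq> xR\<close> \<open>u \<noteq> xR\<close> w_ne by (auto simp: M_def E1_def)
  qed (use \<open>xL \<noteq> xR\<close> w_ne ne in \<open>auto simp: M_def E1_def\<close>)
  moreover have "nodes M - {w} \<union> {r} = nodes N" using in_nodes w by (auto simp: M_def)
  ultimately have move2: "head_move X M (xL, w) (u, c) r
      \<lparr>nodes = nodes N, edges = swap_parents E xL xR u r, lbl = lbl N\<rparr>"
    using E2 by (simp add: M_def)
  have "(head_step X ^^ Suc (Suc 0)) N \<lparr>nodes = nodes N, edges = swap_parents E xL xR u r, lbl = lbl N\<rparr>"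
    using relpowp_Suc_I2[OF head_stepI[OF move1] relpowp_Suc_I2[OF head_stepI[OF move2] relpowp_0_I[of "head_step X"]]] .
  then show ?thesis by (simp add: numeral_2_eq_2)
qed

lemma swap_parents_by_four_head_moves:
  fixes N :: "'x network" and xL xR u r v :: nat
  defines "E \<equiv> edges N"
  assumes N: "phylo_net X N"
    and in_r: "\<And>x. (x, r) \<in> E \<longleftrightarrow> x = u \<or> x = xR" and "u \<noteq> xR"
    and out_r: "\<And>y. (r, y) \<in> E \<longleftrightarrow> y = v"
    and in_u: "\<And>x. (x, u) \<in> E \<longleftrightarrow> x = xL"
    and out_u: "\<And>y. (u, y) \<in> E \<longleftrightarrow> y = r \<or> y = v"
    and "xL \<noteq> xR" and unreachable: "(u, xR) \<notin> E\<^sup>*"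
  shows "(head_step X ^^ 4) N \<lparr>nodes = nodes N, edges = swap_parents E xL xR u r, lbl = lbl N\<rparr>"
proof -
  have E_nodes: "E \<subseteq> nodes N \<times> nodes N" and "acyclic E" and "finite (nodes N)"
    using N by (simp_all add: E_def phylo_net_def)
  have edges: "(xL, u) \<in> E" "(u, r) \<in> E" "(u, v) \<in> E" "(xR, r) \<in> E" "(r, v) \<in> E"
    using in_r in_u out_r out_u by simp_all
  have ne: "u \<noteq> r" "r \<noteq> v" "u \<noteq> v" "xL \<noteq> r"
    using acyclic_trancl_neq[OF \<open>acyclic E\<close>] edges by (blast intro: trancl_into_trancl2)+
  obtain d where in_v: "\<And>x. (x, v) \<in> E \<longleftrightarrow> x = u \<or> x = r" and out_v: "\<And>y. (v, y) \<in> E \<longleftrightarrow> y = d"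
    using reticulation_of_two_parents[OF N, of u v r] edges ne unfolding E_def by blast
  have "(v, d) \<in> E" using out_v by simp
  then have ne_d: "d \<noteq> v" "d \<noteq> r" "d \<noteq> u"
    using acyclic_trancl_neq[OF \<open>acyclic E\<close>] edges by (blast intro: trancl_into_trancl2)+
  obtain l a where in_l: "\<And>x. (x, l) \<in> E \<longleftrightarrow> x = a" and leaf: "\<And>y. (l, y) \<notin> E" and "l \<noteq> d"
    using phylo_net_other_leafE[OF N, of d] unfolding E_def by blast
  have "(a, l) \<in> E" using in_l by simp
  have ne_l: "l \<noteq> u" "l \<noteq> r" "l \<noteq> v" "l \<noteq> xL" "l \<noteq> xR"
    using leaf[of u] leaf[of r] leaf[of v] leaf[of d] edges \<open>(v, d) \<in> E\<close> by auto
  have ne_a: "a \<noteq> u" "a \<noteq> r" "a \<noteq> v"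
    using out_u[of l] out_r[of l] out_v[of l] \<open>(a, l) \<in> E\<close> ne_l \<open>l \<noteq> d\<close> by auto
  obtain w where w: "w \<notin> nodes N" using \<open>finite (nodes N)\<close> ex_new_if_finite infinite_UNIV_nat by blast
  have w_fresh: "(x, w) \<notin> E" "(w, x) \<notin> E" for x using w E_nodes by auto
  have w_ne: "w \<noteq> xL" "w \<noteq> u" "w \<noteq> r" "w \<noteq> v" "w \<noteq> xR" "w \<noteq> d" "w \<noteq> l" "w \<noteq> a"
    using w_fresh edges \<open>(v, d) \<in> E\<close> \<open>(a, l) \<in> E\<close> by blast+
  define E1 where "E1 = E - {(u, v), (r, v), (v, d), (a, l)} \<union> {(r, d), (a, w), (w, l), (u, w)}"
  define M where "M = \<lparr>nodes = nodes N - {v} \<union> {w}, edges = E1, lbl = lbl N\<rparr>"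
  have "(l, u) \<notin> E\<^sup>*" using leaf ne_l by (auto elim: converse_rtranclE)
  then have "acyclic E1"
    unfolding E1_def
    by (rule acyclic_head_move_edges[OF \<open>acyclic E\<close>]) (use edges \<open>(v, d) \<in> E\<close> \<open>(a, l) \<in> E\<close> w_fresh in auto)
  have move1: "head_move X N (u, v) (a, l) w M"
    unfolding M_def E1_def E_def
    by (rule head_moveI[OF N \<open>acyclic E1\<close>[unfolded E1_def E_def]])
      (use in_v out_v ne \<open>(a, l) \<in> E\<close> ne_a ne_l out_r[of d] ne_d w in \<open>auto simp: E_def\<close>)
  have M_unreachable: "(u, xR) \<notin> E1\<^sup>*"
    using rtrancl_head_move_to_pendant_edge[OF edges(3,5) \<open>(v, d) \<in> E\<close> \<open>(a, l) \<in> E\<close> leaf w_fresh,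
        of u xR] unreachable w_ne ne_l
    unfolding E1_def by blast
  let ?T1 = "\<lparr>nodes = nodes M, edges = swap_parents (edges M) xL xR u r, lbl = lbl M\<rparr>"
  have moves23: "(head_step X ^^ 2) M ?T1"
  proof (rule swap_parents_by_two_head_moves[OF head_move_phylo_net[OF move1]])
    show "(x, r) \<in> edges M \<longleftrightarrow> x = u \<or> x = xR" for x
      using in_r[of x] ne ne_l ne_d w_ne by (auto simp: M_def E1_def)
    show "(r, y) \<in> edges M \<longleftrightarrow> y = d" for y
      using out_r[of y] ne ne_a w_ne by (auto simp: M_def E1_def)
    show "(x, u) \<in> edges M \<longleftrightarrow> x = xL" for x
      using in_u[of x] ne ne_l ne_d w_ne by (auto simp: M_def E1_def)
    show "(u, d) \<notin> edges M"
      using out_u[of d] ne ne_d w_ne by (auto simp: M_def E1_def)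
  qed (use \<open>u \<noteq> xR\<close> \<open>xL \<noteq> xR\<close> M_unreachable in \<open>simp_all add: M_def\<close>)
  let ?E4 = "edges ?T1 - {(u, w), (a, w), (w, l), (r, d)} \<union> {(a, l), (r, v), (v, d), (u, v)}"
  have E4: "?E4 = swap_parents E xL xR u r"
    using edges \<open>(v, d) \<in> E\<close> \<open>(a, l) \<in> E\<close> in_v out_v in_l out_r ne ne_l ne_a ne_d w_fresh w_ne
      \<open>u \<noteq> xR\<close> \<open>xL \<noteq> xR\<close>
    by (auto simp: M_def E1_def swap_parents_def)
  have "head_move X ?T1 (u, w) (r, d) v \<lparr>nodes = nodes ?T1 - {w} \<union> {v}, edges = ?E4, lbl = lbl ?T1\<rparr>"
  proof (rule head_moveI[OF relpowp_head_step_phylo_net[OF moves23[unfolded numeral_2_eq_2]]])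
    show "acyclic ?E4"
      using E4 acyclic_swap_parents[OF \<open>acyclic E\<close> edges(1,2) unreachable] by simp
    show "(x, w) \<in> edges ?T1 \<longleftrightarrow> x = u \<or> x = a" for x
      using w_fresh w_ne by (auto simp: M_def E1_def swap_parents_def)
    show "(w, y) \<in> edges ?T1 \<longleftrightarrow> y = l" for y
      using w_fresh w_ne by (auto simp: M_def E1_def swap_parents_def)
    show "(r, d) \<in> edges ?T1"
      using ne ne_d \<open>u \<noteq> xR\<close> by (auto simp: M_def E1_def swap_parents_def)
    show "(a, l) \<notin> edges ?T1"
      using ne_l w_ne \<open>l \<noteq> d\<close> by (auto simp: M_def E1_def swap_parents_def)
  qed (use ne ne_a ne_d w_ne w in \<open>auto simp: M_def\<close>)
  moreover have "nodes ?T1 - {w} \<union> {v} = nodes N"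
    using edges E_nodes w by (auto simp: M_def)
  ultimately have move4: "head_move X ?T1 (u, w) (r, d) v
      \<lparr>nodes = nodes N, edges = swap_parents E xL xR u r, lbl = lbl N\<rparr>"
    using E4 by (simp add: M_def)
  have "(head_step X ^^ Suc (Suc 2)) N \<lparr>nodes = nodes N, edges = swap_parents E xL xR u r, lbl = lbl N\<rparr>"
    using relpowp_Suc_I2[OF head_stepI[OF move1] relpowp_Suc_I[OF moves23 head_stepI[OF move4]]] .
  then show ?thesis by simp
qed

lemma swap_parents_by_head_moves:
  fixes N :: "'x network" and xL xR u r v c :: nat
  defines "E \<equiv> edges N"
  assumes N: "phylo_net X N"
    and in_r: "\<And>x. (x, r) \<in> E \<longleftrightarrow> x = u \<or> x = xR" and "u \<noteq> xR"
    and out_r: "\<And>y. (r, y) \<in> E \<longleftrightarrow> y = c"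
    and in_u: "\<And>x. (x, u) \<in> E \<longleftrightarrow> x = xL"
    and out_u: "\<And>y. (u, y) \<in> E \<longleftrightarrow> y = r \<or> y = v"
    and unreachable: "(u, xR) \<notin> E\<^sup>*"
  shows "\<exists>k \<le> 4. (head_step X ^^ k) N \<lparr>nodes = nodes N, edges = swap_parents E xL xR u r, lbl = lbl N\<rparr>"
proof (cases "xL = xR")
  case True
  then have "swap_parents E xL xR u r = E" using in_u[of xL] in_r[of xR] by (auto simp: swap_parents_def)
  then show ?thesis by (intro exI[of _ 0]) (simp add: E_def)
next
  case False
  show ?thesis
  proof (cases "c = v")
    case True
    have "(head_step X ^^ 4) N \<lparr>nodes = nodes N, edges = swap_parents E xL xR u r, lbl = lbl N\<rparr>"
      unfolding E_def
      by (rule swap_parents_by_four_head_moves[OF N])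
        (use in_r \<open>u \<noteq> xR\<close> out_r in_u out_u \<open>xL \<noteq> xR\<close> unreachable True in \<open>simp_all add: E_def\<close>)
    then show ?thesis by blast
  next
    case False
    have "acyclic E" using N by (simp add: E_def phylo_net_def)
    then have "(u, c) \<notin> E"
      using out_u[of c] out_r[of c] acyclic_trancl_neq[OF \<open>acyclic E\<close> r_into_trancl, of r c] False by auto
    then have "(head_step X ^^ 2) N \<lparr>nodes = nodes N, edges = swap_parents E xL xR u r, lbl = lbl N\<rparr>"
      unfolding E_def
      by (intro swap_parents_by_two_head_moves[OF N])
        (use in_r \<open>u \<noteq> xR\<close> out_r in_u \<open>xL \<noteq> xR\<close> unreachable in \<open>simp_all add: E_def\<close>)
    then show ?thesis by (intro exI[of _ 2]) simp
  qed
qed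

lemma tail_move_edges:
  assumes in_u: "\<And>x. (x, u) \<in> E \<longleftrightarrow> x = p" and out_u: "\<And>y. (u, y) \<in> E \<longleftrightarrow> y = c \<or> y = v"
    and "c \<noteq> v" "p \<noteq> u" "c \<noteq> u" "a \<noteq> u" "b \<noteq> u" "w \<noteq> u"
  shows "suppress (subdivide (E - {(u, v)}) (a, b) w) u \<union> {(w, v)} =
    E - {(p, u), (u, c), (u, v), (a, b)} \<union> {(p, c), (a, w), (w, b), (w, v)}"
proof (rule set_eqI, clarify)
  fix x y
  have "(x, y) \<in> suppress (subdivide (E - {(u, v)}) (a, b) w) u \<longleftrightarrow>
     ((x, y) \<in> subdivide (E - {(u, v)}) (a, b) w \<and> x \<noteq> u \<and> y \<noteq> u) \<or> (x, y) = (p, c)"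
    unfolding suppress_def subdivide_def by (simp add: in_u out_u) (use assms(3-8) in blast)
  then show "(x, y) \<in> suppress (subdivide (E - {(u, v)}) (a, b) w) u \<union> {(w, v)} \<longleftrightarrow>
    (x, y) \<in> E - {(p, u), (u, c), (u, v), (a, b)} \<union> {(p, c), (a, w), (w, b), (w, v)}"
    using assms(3-8) in_u[of x] out_u[of y] by (auto simp: subdivide_def)
qed

lemma net_iso_swap_parents_tail_move:
  fixes N N' :: "'x network"
  defines "E \<equiv> edges N"
  assumes N: "phylo_net X N"
    and in_u: "\<And>x. (x, u) \<in> E \<longleftrightarrow> x = xL" and out_u: "\<And>y. (u, y) \<in> E \<longleftrightarrow> y = r \<or> y = v"
    and "r \<noteq> v" "(xR, r) \<in> E" "xR \<noteq> u"
    and tail: "tail_move X N (u, v) (xR, r) w N'"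
  shows "net_iso \<lparr>nodes = nodes N, edges = swap_parents E xL xR u r, lbl = lbl N\<rparr> N'"
proof -
  let ?T = "\<lparr>nodes = nodes N, edges = swap_parents E xL xR u r, lbl = lbl N\<rparr>" and ?h = "id(u := w)"
  have w: "w \<notin> nodes N" and N': "N' = \<lparr>nodes = nodes N - {u} \<union> {w},
      edges = suppress (subdivide (E - {(u, v)}) (xR, r) w) u \<union> {(w, v)}, lbl = lbl N\<rparr>"
    using tail by (simp_all add: tail_move_def Let_def E_def)
  have E_nodes: "E \<subseteq> nodes N \<times> nodes N" and "acyclic E" using N by (simp_all add: E_def phylo_net_def)
  have edges: "(xL, u) \<in> E" "(u, r) \<in> E" "(u, v) \<in> E" using in_u out_u by simp_all
  have ne: "xL \<noteq> u" "r \<noteq> u" "v \<noteq> u"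
    using acyclic_trancl_neq[OF \<open>acyclic E\<close> r_into_trancl] edges by blast+
  have in_nodes: "xL \<in> nodes N" "u \<in> nodes N" "r \<in> nodes N" "v \<in> nodes N" "xR \<in> nodes N"
    using edges \<open>(xR, r) \<in> E\<close> E_nodes by auto
  then have w_ne: "w \<noteq> xL" "w \<noteq> u" "w \<noteq> r" "w \<noteq> v" "w \<noteq> xR" using w by auto
  have w_fresh: "(x, w) \<notin> E" "(w, x) \<notin> E" for x using w E_nodes by auto
  have "edges N' = suppress (subdivide (E - {(u, v)}) (xR, r) w) u \<union> {(w, v)}" by (simp add: N')
  also have "\<dots> = E - {(xL, u), (u, r), (u, v), (xR, r)} \<union> {(xL, r), (xR, w), (w, r), (w, v)}"
    using \<open>r \<noteq> v\<close> ne \<open>xR \<noteq> u\<close> w_ne by (intro tail_move_edges[OF in_u out_u]) auto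
  finally have N'_edges: "edges N' = E - {(xL, u), (u, r), (u, v), (xR, r)} \<union> {(xL, r), (xR, w), (w, r), (w, v)}" .
  have "(x, y) \<in> swap_parents E xL xR u r \<longleftrightarrow> (?h x, ?h y) \<in> edges N'"
    if "x \<in> nodes N" "y \<in> nodes N" for x y
    using that w w_fresh in_u[of x] out_u[of y] ne w_ne \<open>xR \<noteq> u\<close> \<open>r \<noteq> v\<close>
    by (cases "x = u"; cases "y = u") (auto simp: swap_parents_def N'_edges)
  moreover have "bij_betw ?h (nodes N) (nodes N')"
    using w in_nodes by (auto simp: N' bij_betw_def inj_on_def image_def)
  moreover have "u \<notin> leaves ?T"
  proof
    assume "u \<in> leaves ?T"
    then have "{y. (u, y) \<in> swap_parents E xL xR u r} = {}"
      using finite_out_neighbours[of "swap_parents E xL xR u r" u] phylo_net_finite_edges[OF N]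
      by (auto simp: leaves_def is_leaf_def outdeg_def swap_parents_def E_def)
    then show False using edges ne \<open>xR \<noteq> u\<close> by (auto simp: swap_parents_def)
  qed
  ultimately show ?thesis unfolding net_iso_def by (intro exI[of _ ?h]) (auto simp: N')
qed

theorem mainTheorem9:
  fixes X :: "'x set" and N N' :: "'x network" and xL xR r u v w :: nat
  assumes "phylo_net X N"
    and "is_ret N r"
    and "is_split N u"
    and "(xL, u) \<in> edges N" and "(u, r) \<in> edges N" and "(u, v) \<in> edges N" and "v \<noteq> r"
    and "(xR, r) \<in> edges N" and "xR \<noteq> u"
    and "tail_move X N (u, v) (xR, r) w N'"
  shows "\<exists>k \<le> 4. \<exists>N''. (head_step X ^^ k) N N'' \<and> net_iso N'' N'"
proof -
  let ?T = "\<lparr>nodes = nodes N, edges = swap_parents (edges N) xL xR u r, lbl = lbl N\<rparr>"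
  obtain c where in_r: "\<And>x. (x, r) \<in> edges N \<longleftrightarrow> x = u \<or> x = xR"
      and out_r: "\<And>y. (r, y) \<in> edges N \<longleftrightarrow> y = c"
    using reticulation_of_two_parents[OF assms(1,5,8)] assms(9) by metis
  note in_u = split_node_neighbours(1)[OF assms(1,3,4,5,6) assms(7)[symmetric]]
  note out_u = split_node_neighbours(2)[OF assms(1,3,4,5,6) assms(7)[symmetric]]
  have iso: "net_iso ?T N'"
    using net_iso_swap_parents_tail_move[OF assms(1) in_u out_u] assms(7-10) by simp
  moreover have "acyclic (swap_parents (edges N) xL xR u r)"
  proof (rule net_iso_acyclic[OF iso, simplified])
    show "swap_parents (edges N) xL xR u r \<subseteq> nodes N \<times> nodes N"
      using assms(1,4,8) by (auto simp: phylo_net_def swap_parents_def)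
    have "phylo_net X N'" using assms(10) unfolding tail_move_def Let_def by blast
    then show "acyclic (edges N')" by (simp add: phylo_net_def)
  qed
  then have "(u, xR) \<notin> (edges N)\<^sup>*" by (rule not_rtrancl_if_acyclic_swap_parents)
  then obtain k where "k \<le> 4" "(head_step X ^^ k) N ?T"
    using swap_parents_by_head_moves[OF assms(1) in_r _ out_r in_u out_u] assms(9) by metis
  ultimately show ?thesis by blast
qed

end
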